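(* Let $n\ge 1$ and let $H$ be a maximal subgroup of the semigroup $M_n(\mathbb{FT})$. Then $H$ is isomorphic (as a group) to a direct product $\mathbb{R}\times\Sigma$ for some subgroup $\Sigma$ of the symmetric group $S_n$ (here $\mathbb{R}$ denotes the additive group of real numbers).
   Context: $\mathbb{FT}$ denotes the set $\mathbb{R}$ with operations $a\oplus b=\max(a,b)$ and $a\otimes b=a+b$. $M_n(\mathbb{FT})$ is the set of $n\times n$ matrices with real entries, which is a semigroup under tropical matrix multiplication $(A\otimes B)_{i,j}=\max_{k}(A_{i,k}+B_{k,j})$. A maximal subgroup of a semigroup is a subgroup (a subset which is a group under the semigroup operation, possibly with identity different from any identity of the semigroup) not properly contained in any other subgroup. *)

theory Defs
  imports Complex_Main "HOL-Algebra.Group" "HOL-Algebra.Bij"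
begin

text \<open>n x n tropical matrices over FT, indexed by a finite type 'n (so n = CARD('n) \<ge> 1).\<close>
type_synonym 'n tmat = "'n \<Rightarrow> 'n \<Rightarrow> real"

definition tmult :: "('n::finite) tmat \<Rightarrow> 'n tmat \<Rightarrow> 'n tmat" where
  "tmult A B = (\<lambda>i j. Max (range (\<lambda>k. A i k + B k j)))"

definition sg_subgroup :: "('a \<Rightarrow> 'a \<Rightarrow> 'a) \<Rightarrow> 'a set \<Rightarrow> bool" where
  "sg_subgroup f H \<longleftrightarrow>
     (\<forall>x\<in>H. \<forall>y\<in>H. f x y \<in> H) \<and>
     (\<exists>e\<in>H. (\<forall>x\<in>H. f e x = x \<and> f x e = x) \<and>
             (\<forall>x\<in>H. \<exists>y\<in>H. f x y = e \<and> f y x = e))"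

definition sg_maximal_subgroup :: "('a \<Rightarrow> 'a \<Rightarrow> 'a) \<Rightarrow> 'a set \<Rightarrow> bool" where
  "sg_maximal_subgroup f H \<longleftrightarrow>
     sg_subgroup f H \<and> (\<forall>K. sg_subgroup f K \<and> H \<subseteq> K \<longrightarrow> K = H)"

definition sg_group :: "('a \<Rightarrow> 'a \<Rightarrow> 'a) \<Rightarrow> 'a set \<Rightarrow> 'a monoid" where
  "sg_group f H = \<lparr>carrier = H, mult = f,
     one = (THE e. e \<in> H \<and> (\<forall>x\<in>H. f e x = x \<and> f x e = x))\<rparr>"

definition real_add_group :: "real monoid" where
  "real_add_group = \<lparr>carrier = UNIV, mult = (+), one = 0\<rparr>"

end

theory Submission
  imports Defs
begin

text \<open>Let \<open>E\<close> be the identity of \<open>H\<close>. Then \<open>E\<close> is idempotent, and every \<open>A \<in> H\<close>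
  acts on the tropical column space \<open>{v. E \<otimes> v = v}\<close> as an automorphism of its
  max-plus structure. Take a set \<open>S\<close> of columns of \<open>E\<close> of least size that generates this space:
  its columns are extremal, no two of them differ by a scalar, and every extremal vector
  is a scalar shift of one of them. So \<open>A\<close> sends column \<open>j \<in> S\<close> to column \<open>\<sigma>\<^sub>A j\<close>
  shifted by \<open>\<lambda>\<^sub>A j\<close>, where \<open>\<sigma>\<^sub>A\<close> permutes \<open>S\<close>, and \<open>A \<mapsto> (mean of \<lambda>\<^sub>A, \<sigma>\<^sub>A)\<close> is a
  homomorphism into \<open>\<real> \<times> Sym(S)\<close>. Maximality makes \<open>H\<close> closed under scalar shifts,
  which gives surjectivity onto \<open>\<real> \<times> \<sigma>(H)\<close>. For injectivity, an element with trivial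
  image fixes all generators, hence the whole column space, hence equals \<open>E\<close>.\<close>

section \<open>Tropical column spaces\<close>

definition tmv :: "('n::finite) tmat \<Rightarrow> ('n \<Rightarrow> real) \<Rightarrow> ('n \<Rightarrow> real)" where
  "tmv A v = (\<lambda>i. Max (range (\<lambda>k. A i k + v k)))"

definition col :: "('n::finite) tmat \<Rightarrow> 'n \<Rightarrow> ('n \<Rightarrow> real)" where
  "col A j = (\<lambda>i. A i j)"

definition vshift :: "real \<Rightarrow> ('n \<Rightarrow> real) \<Rightarrow> ('n \<Rightarrow> real)" where
  "vshift c v = (\<lambda>i. c + v i)"

definition mshift :: "real \<Rightarrow> ('n::finite) tmat \<Rightarrow> 'n tmat" where
  "mshift c A = (\<lambda>i j. c + A i j)"

definition vsup :: "('n \<Rightarrow> real) \<Rightarrow> ('n \<Rightarrow> real) \<Rightarrow> ('n \<Rightarrow> real)" where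
  "vsup u w = (\<lambda>i. max (u i) (w i))"

text \<open>The residual: the largest \<open>c\<close> with \<open>vshift c (col E h) \<le> v\<close>.\<close>
definition resid :: "('n::finite) tmat \<Rightarrow> 'n \<Rightarrow> ('n \<Rightarrow> real) \<Rightarrow> real" where
  "resid E h v = Min (range (\<lambda>i. v i - E i h))"

text \<open>Since \<open>resid E h v + E i h \<le> v i\<close> always holds, this says that \<open>v\<close> is the tropical
  linear combination of the columns \<open>col E h\<close>, \<open>h \<in> S\<close>, with coefficients \<open>resid E h v\<close>.\<close>
definition spanned_by :: "('n::finite) tmat \<Rightarrow> 'n set \<Rightarrow> ('n \<Rightarrow> real) \<Rightarrow> bool" where
  "spanned_by E S v \<longleftrightarrow> (\<forall>i. \<exists>h\<in>S. v i \<le> resid E h v + E i h)"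

definition generating_set :: "('n::finite) tmat \<Rightarrow> 'n set \<Rightarrow> bool" where
  "generating_set E S \<longleftrightarrow> (\<forall>k. spanned_by E S (col E k))"

text \<open>For idempotent \<open>E\<close> these are exactly the vectors of the tropical column space of \<open>E\<close>.\<close>
definition in_colspace :: "('n::finite) tmat \<Rightarrow> ('n \<Rightarrow> real) \<Rightarrow> bool" where
  "in_colspace E v \<longleftrightarrow> tmv E v = v"

definition extremal :: "('n::finite) tmat \<Rightarrow> ('n \<Rightarrow> real) \<Rightarrow> bool" where
  "extremal E v \<longleftrightarrow> in_colspace E v \<and>
     (\<forall>u w. in_colspace E u \<longrightarrow> in_colspace E w \<longrightarrow> v = vsup u w \<longrightarrow> v = u \<or> v = w)"

lemma tmv_ge: "A i k + v k \<le> tmv A v i"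
  unfolding tmv_def by (rule Max_ge) auto

lemma tmv_attained: "\<exists>k. tmv A v i = A i k + v k"
proof -
  have "Max (range (\<lambda>k. A i k + v k)) \<in> range (\<lambda>k. A i k + v k)"
    by (rule Max_in) auto
  then obtain k where "Max (range (\<lambda>k. A i k + v k)) = A i k + v k" by blast
  then show ?thesis unfolding tmv_def by blast
qed

lemma tmv_eqI:
  assumes "\<And>k. A i k + v k \<le> x" and "\<exists>k. x \<le> A i k + v k"
  shows "tmv A v i = x"
proof -
  obtain k where "tmv A v i = A i k + v k" using tmv_attained by blast
  moreover obtain k' where "x \<le> A i k' + v k'" using assms(2) by blast
  ultimately show ?thesis using assms(1)[of k] tmv_ge[of A i k' v] by linarith
qed

lemma tmult_eq_tmv: "tmult A B i j = tmv A (col B j) i"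
  unfolding tmult_def tmv_def col_def by simp

lemma col_tmult: "col (tmult A B) j = tmv A (col B j)"
  by (auto simp: col_def tmult_eq_tmv)

lemma tmv_tmult: "tmv (tmult A B) v = tmv A (tmv B v)"
proof
  fix i
  show "tmv (tmult A B) v i = tmv A (tmv B v) i"
  proof (rule tmv_eqI)
    fix k
    obtain l where l: "tmult A B i k = A i l + B l k"
      using tmv_attained[of A "col B k" i] by (auto simp: tmult_eq_tmv col_def)
    show "tmult A B i k + v k \<le> tmv A (tmv B v) i"
      using l tmv_ge[of B l k v] tmv_ge[of A i l "tmv B v"] by linarith
  next
    obtain l where l: "tmv A (tmv B v) i = A i l + tmv B v l" using tmv_attained by blast
    obtain k where k: "tmv B v l = B l k + v k" using tmv_attained by blast
    have "A i l + B l k \<le> tmult A B i k"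
      using tmv_ge[of A i l "col B k"] by (simp add: tmult_eq_tmv col_def)
    then show "\<exists>k. tmv A (tmv B v) i \<le> tmult A B i k + v k"
      using l k by (intro exI[of _ k]) linarith
  qed
qed

lemma tmult_assoc: "tmult (tmult A B) C = tmult A (tmult B C)"
  by (intro ext) (simp add: tmult_eq_tmv tmv_tmult col_tmult)

lemma tmv_mono: "(\<And>k. u k \<le> w k) \<Longrightarrow> tmv A u i \<le> tmv A w i"
  using tmv_attained[of A u i] tmv_ge[of A i _ w] by (metis add_left_mono order_trans)

lemma tmv_vshift: "tmv A (vshift c v) = vshift c (tmv A v)"
proof
  fix i
  obtain k where "tmv A v i = A i k + v k" using tmv_attained by blast
  then show "tmv A (vshift c v) i = vshift c (tmv A v) i"
    unfolding vshift_def using tmv_ge[of A i _ v]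
    by (intro tmv_eqI) (force simp: algebra_simps)+
qed

lemma tmv_mshift: "tmv (mshift c A) v = vshift c (tmv A v)"
proof
  fix i
  obtain k where "tmv A v i = A i k + v k" using tmv_attained by blast
  then show "tmv (mshift c A) v i = vshift c (tmv A v) i"
    unfolding vshift_def mshift_def using tmv_ge[of A i _ v]
    by (intro tmv_eqI) (force simp: algebra_simps)+
qed

lemma tmv_vsup: "tmv A (vsup u w) = vsup (tmv A u) (tmv A w)"
proof
  fix i
  obtain k where k: "tmv A u i = A i k + u k" using tmv_attained by blast
  obtain k' where k': "tmv A w i = A i k' + w k'" using tmv_attained by blast
  show "tmv A (vsup u w) i = vsup (tmv A u) (tmv A w) i"
    unfolding vsup_def
  proof (rule tmv_eqI)
    fix l show "A i l + max (u l) (w l) \<le> max (tmv A u i) (tmv A w i)"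
      using tmv_ge[of A i l u] tmv_ge[of A i l w] by linarith
  next
    show "\<exists>l. max (tmv A u i) (tmv A w i) \<le> A i l + max (u l) (w l)"
    proof (cases "tmv A u i \<le> tmv A w i")
      case True then show ?thesis using k' by (intro exI[of _ k']) linarith
    next
      case False then show ?thesis using k by (intro exI[of _ k]) linarith
    qed
  qed
qed

lemma vshift_vshift: "vshift c (vshift d v) = vshift (d + c) v"
  by (simp add: vshift_def fun_eq_iff algebra_simps)

lemma tmult_mshift_left: "tmult (mshift c A) B = mshift c (tmult A B)"
proof (intro ext)
  fix i j
  have "tmult (mshift c A) B i j = vshift c (tmv A (col B j)) i"
    by (simp only: tmult_eq_tmv tmv_mshift)
  then show "tmult (mshift c A) B i j = mshift c (tmult A B) i j"
    by (simp add: vshift_def mshift_def tmult_eq_tmv)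
qed

lemma tmult_mshift_right: "tmult A (mshift c B) = mshift c (tmult A B)"
proof (intro ext)
  fix i j
  have "col (mshift c B) j = vshift c (col B j)"
    by (simp add: col_def mshift_def vshift_def)
  then have "tmult A (mshift c B) i j = vshift c (tmv A (col B j)) i"
    by (simp only: tmult_eq_tmv tmv_vshift)
  then show "tmult A (mshift c B) i j = mshift c (tmult A B) i j"
    by (simp add: vshift_def mshift_def tmult_eq_tmv)
qed

lemma mshift_mshift: "mshift c (mshift d A) = mshift (c + d) A"
  by (simp add: mshift_def add.assoc)

lemma mshift_0: "mshift 0 A = A"
  by (simp add: mshift_def)

lemma resid_le: "resid E h v + E i h \<le> v i"
proof -
  have "resid E h v \<le> v i - E i h" unfolding resid_def by (rule Min_le) auto
  then show ?thesis by linarith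
qed

lemma resid_greatest: "(\<And>i. c + E i h \<le> v i) \<Longrightarrow> c \<le> resid E h v"
  unfolding resid_def by (rule Min.boundedI) (auto simp: algebra_simps)

lemma resid_mono: "(\<And>i. u i \<le> v i) \<Longrightarrow> resid E h u \<le> resid E h v"
  by (rule resid_greatest) (meson resid_le order_trans)

lemma spanned_by_col: "h \<in> T \<Longrightarrow> spanned_by E T (col E h)"
proof -
  assume h: "h \<in> T"
  have "0 \<le> resid E h (col E h)" by (rule resid_greatest) (simp add: col_def)
  then show ?thesis unfolding spanned_by_def col_def using h by force
qed

lemma spanned_by_trans:
  assumes "spanned_by E S v" and "\<And>h. h \<in> S \<Longrightarrow> spanned_by E T (col E h)"
  shows "spanned_by E T v"
  unfolding spanned_by_def
proof
  fix i
  obtain h where h: "h \<in> S" "v i \<le> resid E h v + E i h"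
    using assms(1) unfolding spanned_by_def by blast
  obtain h' where h': "h' \<in> T" "E i h \<le> resid E h' (col E h) + E i h'"
    using assms(2)[OF h(1)] unfolding spanned_by_def col_def by blast
  have "resid E h v + resid E h' (col E h) \<le> resid E h' v"
  proof (rule resid_greatest)
    fix i'
    show "resid E h v + resid E h' (col E h) + E i' h' \<le> v i'"
      using resid_le[of E h' "col E h" i'] resid_le[of E h v i'] unfolding col_def by linarith
  qed
  then have "v i \<le> resid E h' v + E i h'" using h h' by linarith
  then show "\<exists>h\<in>T. v i \<le> resid E h v + E i h" using h'(1) by blast
qed

lemma in_colspace_col: "tmult E E = E \<Longrightarrow> in_colspace E (col E j)"
  by (metis col_tmult in_colspace_def)

lemma in_colspace_vshift: "in_colspace E v \<Longrightarrow> in_colspace E (vshift c v)"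
  by (simp add: in_colspace_def tmv_vshift)

lemma in_colspace_ge: "in_colspace E v \<Longrightarrow> E i k + v k \<le> v i"
  by (metis in_colspace_def tmv_ge)

lemma in_colspace_attained: "in_colspace E v \<Longrightarrow> \<exists>k. v i = E i k + v k"
  by (metis in_colspace_def tmv_attained)

lemma in_colspace_Max:
  assumes "finite F" "F \<noteq> {}" and "\<And>t. t \<in> F \<Longrightarrow> in_colspace E (f t)"
  shows "in_colspace E (\<lambda>i. Max ((\<lambda>t. f t i) ` F))" (is "in_colspace E ?w")
proof -
  have ge: "f t i \<le> ?w i" if "t \<in> F" for t i
    using assms(1) that by (intro Max_ge) auto
  have attained: "\<exists>t\<in>F. ?w i = f t i" for i
  proof -
    have "?w i \<in> (\<lambda>t. f t i) ` F" using assms(1,2) by (intro Max_in) auto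
    then show ?thesis by auto
  qed
  show ?thesis
    unfolding in_colspace_def
  proof
    fix i show "tmv E ?w i = ?w i"
    proof (rule tmv_eqI)
      fix k
      obtain t where t: "t \<in> F" "?w k = f t k" using attained by blast
      then show "E i k + ?w k \<le> ?w i"
        using in_colspace_ge[OF assms(3)] ge[OF t(1), of i] by (metis order_trans)
    next
      obtain t where t: "t \<in> F" "?w i = f t i" using attained by blast
      obtain k where "f t i = E i k + f t k" using in_colspace_attained assms(3) t(1) by blast
      then show "\<exists>k. ?w i \<le> E i k + ?w k" using t ge[OF t(1), of k] by (intro exI[of _ k]) linarith
    qed
  qed
qed

lemma generating_set_UNIV:
  assumes idem: "tmult E E = E" shows "generating_set E UNIV"
  unfolding generating_set_def spanned_by_def
proof (intro allI)
  fix k i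
  have fix_k: "tmv E (col E k) = col E k" using idem by (metis col_tmult)
  obtain j where j: "tmv E (col E k) i = E i j + col E k j" using tmv_attained by blast
  have "E j k \<le> resid E j (col E k)"
    by (rule resid_greatest) (metis fix_k tmv_ge col_def add.commute)
  moreover have "col E k i = E i j + E j k" using j fix_k by (simp add: col_def)
  ultimately show "\<exists>h\<in>UNIV. col E k i \<le> resid E h (col E k) + E i h"
    by (intro bexI[of _ j]) auto
qed

lemma spanned_by_generating_set:
  assumes gen: "generating_set E S" and v: "in_colspace E v"
  shows "spanned_by E S v"
  unfolding spanned_by_def
proof
  fix i
  obtain k where k: "v i = E i k + v k" using in_colspace_attained[OF v] by blast
  obtain h where h: "h \<in> S" "col E k i \<le> resid E h (col E k) + E i h"
    using gen unfolding generating_set_def spanned_by_def by blast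
  have "resid E h (col E k) + v k \<le> resid E h v"
  proof (rule resid_greatest)
    fix i' show "resid E h (col E k) + v k + E i' h \<le> v i'"
      using resid_le[of E h "col E k" i'] in_colspace_ge[OF v, of i' k] by (simp add: col_def)
  qed
  then show "\<exists>h\<in>S. v i \<le> resid E h v + E i h" using h k by (force simp: col_def)
qed

lemma extremal_eq_member:
  assumes "finite T" "T \<noteq> {}" and "extremal E v"
    and "\<And>t. t \<in> T \<Longrightarrow> in_colspace E (f t)" and "\<And>t i. t \<in> T \<Longrightarrow> f t i \<le> v i"
    and "\<And>i. \<exists>t\<in>T. v i \<le> f t i"
  shows "\<exists>t\<in>T. f t = v"
  using assms(1,2,4-)
proof (induction T rule: finite_ne_induct)
  case (singleton x)
  then show ?case by (auto intro!: ext intro: order_antisym)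
next
  case (insert x F)
  define w where "w = (\<lambda>i. Max ((\<lambda>t. f t i) ` F))"
  have w_ge: "f t i \<le> w i" if "t \<in> F" for t i
    unfolding w_def using insert.hyps(1) that by (intro Max_ge) auto
  have w_le: "w i \<le> v i" for i
    unfolding w_def using insert by (intro Max.boundedI) auto
  have "in_colspace E w"
    unfolding w_def using insert by (intro in_colspace_Max) auto
  moreover have "v = vsup (f x) w"
  proof
    fix i
    obtain t where "t \<in> insert x F" "v i \<le> f t i" using insert.prems(3) by blast
    then have "v i \<le> max (f x i) (w i)" using w_ge[of t i] by (auto simp: le_max_iff_disj)
    moreover have "max (f x i) (w i) \<le> v i" using insert.prems(2) w_le by simp
    ultimately show "v i = vsup (f x) w i" unfolding vsup_def by linarith
  qed
  ultimately have "v = f x \<or> v = w" using assms(3) insert.prems(1) unfolding extremal_def by blast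
  moreover have "\<exists>t\<in>F. f t = v" if "v = w"
  proof (rule insert.IH)
    show "\<And>i. \<exists>t\<in>F. v i \<le> f t i"
      using that insert.hyps(1,2) unfolding w_def by (metis (no_types, lifting) Max_in finite_imageI imageE image_is_empty order_refl)
  qed (use insert.prems in auto)
  ultimately show ?case by blast
qed

section \<open>Minimal generating sets\<close>

locale min_generating_set =
  fixes E :: "('n::finite) tmat" and S :: "'n set"
  assumes idem: "tmult E E = E" and generating: "generating_set E S"
    and card_least: "\<And>S'. generating_set E S' \<Longrightarrow> card S \<le> card S'"
begin

lemma gens_nonempty: "S \<noteq> {}"
  using generating unfolding generating_set_def spanned_by_def by blast

lemma not_spanned_by_others:
  assumes g: "g \<in> S" shows "\<not> spanned_by E (S - {g}) (col E g)"
proof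
  assume spanned: "spanned_by E (S - {g}) (col E g)"
  have "generating_set E (S - {g})"
    unfolding generating_set_def
  proof
    fix k
    show "spanned_by E (S - {g}) (col E k)"
    proof (rule spanned_by_trans)
      show "spanned_by E S (col E k)" using generating unfolding generating_set_def by blast
    next
      fix h assume "h \<in> S"
      then show "spanned_by E (S - {g}) (col E h)"
        using spanned by (cases "h = g") (auto intro: spanned_by_col)
    qed
  qed
  then have "card S \<le> card (S - {g})" by (rule card_least)
  moreover have "card (S - {g}) < card S" using card_Diff1_less[OF finite[of S] g] .
  ultimately show False by linarith
qed

lemma col_eq_vshift_col:
  assumes "j \<in> S" "j' \<in> S" "col E j = vshift c (col E j')"
  shows "j = j'"
proof (rule ccontr)
  assume ne: "j \<noteq> j'"
  have col_j: "col E j i = c + E i j'" for i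
    using fun_cong[OF assms(3), of i] by (simp add: vshift_def col_def)
  then have "c \<le> resid E j' (col E j)"
    by (intro resid_greatest) simp
  then have "spanned_by E (S - {j}) (col E j)"
    unfolding spanned_by_def using assms(2) ne col_j by force
  then show False using not_spanned_by_others assms(1) by blast
qed

lemma vshift_col_inj:
  assumes "j \<in> S" "k \<in> S" "vshift c (col E j) = vshift c' (col E k)"
  shows "j = k \<and> c = c'"
proof -
  have entries: "c + E i j = c' + E i k" for i
    using fun_cong[OF assms(3), of i] by (simp add: vshift_def col_def)
  then have "col E j = vshift (c' - c) (col E k)"
    by (auto simp: vshift_def col_def algebra_simps)
  then have "j = k" using col_eq_vshift_col assms by blast
  with entries show ?thesis by auto
qed

text \<open>A vector of the column space strictly below \<open>col E g\<close> is spanned by the generators,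
  but not by \<open>g\<close> alone; so wherever it touches \<open>col E g\<close>, another generator reaches \<open>col E g\<close>.\<close>
lemma touching_below_col:
  assumes g: "g \<in> S" and x: "in_colspace E x" and below: "\<And>i. x i \<le> E i g"
    and ne: "x \<noteq> col E g" and touch: "x i = E i g"
  shows "\<exists>h\<in>S - {g}. E i g \<le> resid E h (col E g) + E i h"
proof -
  have "resid E g x < 0"
  proof (rule ccontr)
    assume "\<not> resid E g x < 0"
    then have "E i' g \<le> x i'" for i' using resid_le[of E g x i'] by linarith
    then have "x = col E g" using below by (auto simp: fun_eq_iff col_def intro: order_antisym)
    with ne show False by blast
  qed
  obtain h where h: "h \<in> S" "x i \<le> resid E h x + E i h"
    using spanned_by_generating_set[OF generating x] unfolding spanned_by_def by blast
  have "h \<noteq> g" using h \<open>resid E g x < 0\<close> touch by auto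
  moreover have "resid E h x \<le> resid E h (col E g)" by (rule resid_mono) (simp add: col_def below)
  ultimately show ?thesis using h touch by (intro bexI[of _ h]) auto
qed

lemma extremal_col:
  assumes g: "g \<in> S" shows "extremal E (col E g)"
  unfolding extremal_def
proof (intro conjI allI impI)
  show "in_colspace E (col E g)" using in_colspace_col idem by blast
  fix u w assume u: "in_colspace E u" and w: "in_colspace E w" and eq: "col E g = vsup u w"
  show "col E g = u \<or> col E g = w"
  proof (rule ccontr)
    assume neither: "\<not> (col E g = u \<or> col E g = w)"
    have "\<exists>h\<in>S - {g}. col E g i \<le> resid E h (col E g) + E i h" for i
    proof -
      have "u i' \<le> E i' g" "w i' \<le> E i' g" for i'
        using eq by (auto simp: fun_eq_iff vsup_def col_def)
      moreover have "E i g = u i \<or> E i g = w i"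
        using eq by (auto simp: fun_eq_iff vsup_def col_def max_def)
      ultimately show ?thesis
        using touching_below_col[OF g u, of i] touching_below_col[OF g w, of i] neither
        by (auto simp: col_def)
    qed
    then show False using not_spanned_by_others[OF g] unfolding spanned_by_def by blast
  qed
qed

lemma extremal_eq_vshift_col:
  assumes ex: "extremal E v" shows "\<exists>h\<in>S. v = vshift (resid E h v) (col E h)"
proof -
  have v: "in_colspace E v" using ex unfolding extremal_def by blast
  have "\<exists>h\<in>S. vshift (resid E h v) (col E h) = v"
  proof (rule extremal_eq_member[OF finite gens_nonempty ex])
    show "\<And>h. h \<in> S \<Longrightarrow> in_colspace E (vshift (resid E h v) (col E h))"
      by (intro in_colspace_vshift in_colspace_col idem)
    show "\<And>h i. h \<in> S \<Longrightarrow> vshift (resid E h v) (col E h) i \<le> v i"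
      by (simp add: vshift_def col_def resid_le)
    show "\<And>i. \<exists>h\<in>S. v i \<le> vshift (resid E h v) (col E h) i"
      using spanned_by_generating_set[OF generating v] by (simp add: spanned_by_def vshift_def col_def)
  qed
  then show ?thesis by metis
qed

end

section \<open>Groups of matrices acting on a column space\<close>

locale shift_closed_group = min_generating_set E S for E :: "('n::finite) tmat" and S +
  fixes H :: "'n tmat set"
  assumes closed: "\<And>A B. A \<in> H \<Longrightarrow> B \<in> H \<Longrightarrow> tmult A B \<in> H"
    and E_in: "E \<in> H"
    and left_unit: "\<And>A. A \<in> H \<Longrightarrow> tmult E A = A"
    and right_unit: "\<And>A. A \<in> H \<Longrightarrow> tmult A E = A"
    and inverse: "\<And>A. A \<in> H \<Longrightarrow> \<exists>B\<in>H. tmult A B = E \<and> tmult B A = E"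
    and shift_closed: "\<And>A c. A \<in> H \<Longrightarrow> mshift c A \<in> H"
begin

lemma in_colspace_tmv: "A \<in> H \<Longrightarrow> in_colspace E (tmv A v)"
  unfolding in_colspace_def by (metis tmv_tmult left_unit)

lemma extremal_tmv:
  assumes A: "A \<in> H" and ex: "extremal E v" shows "extremal E (tmv A v)"
  unfolding extremal_def
proof (intro conjI allI impI)
  show "in_colspace E (tmv A v)" using in_colspace_tmv A by blast
  obtain B where B: "B \<in> H" "tmult A B = E" "tmult B A = E" using inverse A by blast
  have v: "in_colspace E v" using ex unfolding extremal_def by blast
  have A_B_id: "tmv A (tmv B x) = x" if "in_colspace E x" for x
    using that B(2) by (metis in_colspace_def tmv_tmult)
  fix u w assume u: "in_colspace E u" and w: "in_colspace E w" and eq: "tmv A v = vsup u w"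
  have "v = tmv B (tmv A v)" using v B(3) by (metis in_colspace_def tmv_tmult)
  also have "\<dots> = vsup (tmv B u) (tmv B w)" by (simp add: eq tmv_vsup)
  finally have "v = tmv B u \<or> v = tmv B w" using ex in_colspace_tmv[OF B(1)] unfolding extremal_def by blast
  then show "tmv A v = u \<or> tmv A v = w" using A_B_id u w by auto
qed

lemma tmv_col_shifted_col:
  "A \<in> H \<Longrightarrow> j \<in> S \<Longrightarrow> \<exists>k. k \<in> S \<and> (\<exists>c. tmv A (col E j) = vshift c (col E k))"
  using extremal_eq_vshift_col[OF extremal_tmv[OF _ extremal_col]] by blast

text \<open>\<open>A\<close> maps the generator column \<open>j\<close> to the generator column \<open>perm_of A j\<close>
  shifted by \<open>scale_of A j\<close>; outside \<open>S\<close> the permutation is the identity.\<close>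
definition perm_of :: "'n tmat \<Rightarrow> 'n \<Rightarrow> 'n" where
  "perm_of A j = (if j \<in> S then (SOME k. k \<in> S \<and> (\<exists>c. tmv A (col E j) = vshift c (col E k))) else j)"

definition scale_of :: "'n tmat \<Rightarrow> 'n \<Rightarrow> real" where
  "scale_of A j = (SOME c. tmv A (col E j) = vshift c (col E (perm_of A j)))"

definition mean_scale :: "'n tmat \<Rightarrow> real" where
  "mean_scale A = (\<Sum>j\<in>S. scale_of A j) / card S"

lemma perm_of_scale_of:
  assumes "A \<in> H" "j \<in> S"
  shows "perm_of A j \<in> S \<and> tmv A (col E j) = vshift (scale_of A j) (col E (perm_of A j))"
proof -
  have perm: "perm_of A j \<in> S \<and> (\<exists>c. tmv A (col E j) = vshift c (col E (perm_of A j)))"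
    unfolding perm_of_def using assms(2) someI_ex[OF tmv_col_shifted_col[OF assms]] by simp
  then have "tmv A (col E j) = vshift (scale_of A j) (col E (perm_of A j))"
    unfolding scale_of_def by (metis (mono_tags, lifting) someI_ex)
  with perm show ?thesis by blast
qed

lemma perm_of_scale_of_unique:
  assumes "A \<in> H" "j \<in> S" "k \<in> S" "tmv A (col E j) = vshift c (col E k)"
  shows "perm_of A j = k \<and> scale_of A j = c"
  using perm_of_scale_of[OF assms(1,2)] assms(3,4) vshift_col_inj by metis

lemma perm_of_outside: "j \<notin> S \<Longrightarrow> perm_of A j = j"
  by (simp add: perm_of_def)

lemma perm_of_scale_of_E: "j \<in> S \<Longrightarrow> perm_of E j = j \<and> scale_of E j = 0"
  by (rule perm_of_scale_of_unique[OF E_in]) (auto simp: col_tmult[symmetric] idem vshift_def)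

lemma perm_of_E: "perm_of E = id"
  using perm_of_scale_of_E perm_of_outside by (auto simp: fun_eq_iff)

lemma perm_of_scale_of_tmult:
  assumes A: "A \<in> H" and B: "B \<in> H" and j: "j \<in> S"
  shows "perm_of (tmult A B) j = perm_of A (perm_of B j)
    \<and> scale_of (tmult A B) j = scale_of B j + scale_of A (perm_of B j)"
proof (rule perm_of_scale_of_unique[OF closed[OF A B] j])
  note B_j = perm_of_scale_of[OF B j] and A_Bj = perm_of_scale_of[OF A conjunct1[OF B_j]]
  show "perm_of A (perm_of B j) \<in> S" using A_Bj by blast
  show "tmv (tmult A B) (col E j)
      = vshift (scale_of B j + scale_of A (perm_of B j)) (col E (perm_of A (perm_of B j)))"
    using B_j A_Bj by (simp add: tmv_tmult tmv_vshift vshift_vshift add.commute)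
qed

lemma perm_of_tmult: "A \<in> H \<Longrightarrow> B \<in> H \<Longrightarrow> perm_of (tmult A B) = perm_of A \<circ> perm_of B"
  by (rule ext) (metis comp_apply perm_of_outside perm_of_scale_of_tmult)

lemma perm_of_scale_of_mshift:
  assumes A: "A \<in> H" and j: "j \<in> S"
  shows "perm_of (mshift c A) j = perm_of A j \<and> scale_of (mshift c A) j = c + scale_of A j"
  using perm_of_scale_of[OF A j]
  by (intro perm_of_scale_of_unique[OF shift_closed[OF A] j])
     (simp_all add: tmv_mshift vshift_vshift add.commute)

lemma perm_of_mshift: "A \<in> H \<Longrightarrow> perm_of (mshift c A) = perm_of A"
  by (rule ext) (metis perm_of_outside perm_of_scale_of_mshift)

lemma perm_of_inverse:
  assumes "A \<in> H" "B \<in> H" "tmult A B = E" "tmult B A = E"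
  shows "perm_of A \<circ> perm_of B = id" "perm_of B \<circ> perm_of A = id"
  using assms perm_of_tmult perm_of_E by metis+

lemma bij_perm_of: "A \<in> H \<Longrightarrow> bij (perm_of A)"
  using inverse perm_of_inverse o_bij by metis

lemma bij_betw_perm_of:
  assumes A: "A \<in> H" shows "bij_betw (perm_of A) S S"
proof -
  obtain B where B: "B \<in> H" "tmult A B = E" "tmult B A = E" using inverse A by blast
  show ?thesis
  proof (rule bij_betw_byWitness[where f'="perm_of B"])
    show "\<forall>j\<in>S. perm_of B (perm_of A j) = j" "\<forall>j\<in>S. perm_of A (perm_of B j) = j"
      using perm_of_inverse[OF A B] by (metis comp_apply id_apply)+
    show "perm_of A ` S \<subseteq> S" "perm_of B ` S \<subseteq> S"
      using perm_of_scale_of[OF A] perm_of_scale_of[OF B(1)] by auto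
  qed
qed

lemma mean_scale_tmult:
  assumes A: "A \<in> H" and B: "B \<in> H"
  shows "mean_scale (tmult A B) = mean_scale A + mean_scale B"
proof -
  have "(\<Sum>j\<in>S. scale_of (tmult A B) j) = (\<Sum>j\<in>S. scale_of B j) + (\<Sum>j\<in>S. scale_of A (perm_of B j))"
    using perm_of_scale_of_tmult[OF A B] by (simp add: sum.distrib)
  also have "(\<Sum>j\<in>S. scale_of A (perm_of B j)) = (\<Sum>j\<in>S. scale_of A j)"
    using sum.reindex_bij_betw[OF bij_betw_perm_of[OF B]] by simp
  finally show ?thesis unfolding mean_scale_def by (simp add: add_divide_distrib)
qed

lemma mean_scale_mshift:
  assumes A: "A \<in> H" shows "mean_scale (mshift c A) = c + mean_scale A"
proof -
  have "(\<Sum>j\<in>S. scale_of (mshift c A) j) = real (card S) * c + (\<Sum>j\<in>S. scale_of A j)"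
    using perm_of_scale_of_mshift[OF A] by (simp add: sum.distrib)
  then show ?thesis unfolding mean_scale_def using gens_nonempty by (simp add: add_divide_distrib)
qed

lemma mean_scale_E: "mean_scale E = 0"
  unfolding mean_scale_def using perm_of_scale_of_E by simp

text \<open>If \<open>M\<close> fixes every generator up to a shift, all shifts agree: apply \<open>M\<close> to
  \<open>vshift (resid E k (col E j)) (col E k) \<le> col E j\<close>.\<close>
lemma scale_of_le:
  assumes M: "M \<in> H" and fixes_S: "\<And>j. j \<in> S \<Longrightarrow> perm_of M j = j" and j: "j \<in> S" and k: "k \<in> S"
  shows "scale_of M k \<le> scale_of M j"
proof -
  define m where "m = resid E k (col E j)"
  have M_j: "tmv M (col E j) = vshift (scale_of M j) (col E j)"
    using perm_of_scale_of[OF M j] fixes_S[OF j] by simp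
  have M_k: "tmv M (col E k) = vshift (scale_of M k) (col E k)"
    using perm_of_scale_of[OF M k] fixes_S[OF k] by simp
  have "m + scale_of M k - scale_of M j \<le> m" unfolding m_def
  proof (rule resid_greatest)
    fix i
    have "tmv M (vshift m (col E k)) i \<le> tmv M (col E j) i"
      by (rule tmv_mono) (use resid_le[of E k "col E j"] in \<open>simp add: vshift_def col_def m_def\<close>)
    moreover have "tmv M (vshift m (col E k)) = vshift (scale_of M k + m) (col E k)"
      by (simp only: tmv_vshift M_k vshift_vshift)
    ultimately show "resid E k (col E j) + scale_of M k - scale_of M j + E i k \<le> col E j i"
      using M_j by (simp add: vshift_def col_def m_def)
  qed
  then show ?thesis by linarith
qed

lemma fixes_generators:
  assumes M: "M \<in> H" and fixes_S: "\<And>j. j \<in> S \<Longrightarrow> perm_of M j = j" and mean: "mean_scale M = 0"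
    and j: "j \<in> S"
  shows "tmv M (col E j) = col E j"
proof -
  have "scale_of M k = scale_of M j" if "k \<in> S" for k
    using scale_of_le[OF M fixes_S] that j by (meson order_antisym)
  then have "(\<Sum>k\<in>S. scale_of M k) = real (card S) * scale_of M j" by simp
  then have "scale_of M j = 0" using mean gens_nonempty unfolding mean_scale_def by simp
  then show ?thesis using perm_of_scale_of[OF M j] fixes_S[OF j] by (simp add: vshift_def)
qed

lemma le_tmv_if_fixes_generators:
  assumes M: "M \<in> H" and fixes_gens: "\<And>j. j \<in> S \<Longrightarrow> tmv M (col E j) = col E j"
    and v: "in_colspace E v"
  shows "v i \<le> tmv M v i"
proof -
  obtain h where h: "h \<in> S" "v i \<le> resid E h v + E i h"
    using spanned_by_generating_set[OF generating v] unfolding spanned_by_def by blast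
  have "tmv M (vshift (resid E h v) (col E h)) i \<le> tmv M v i"
    by (rule tmv_mono) (simp add: vshift_def col_def resid_le)
  moreover have "tmv M (vshift (resid E h v) (col E h)) = vshift (resid E h v) (col E h)"
    by (simp only: tmv_vshift fixes_gens[OF h(1)])
  ultimately show ?thesis using h by (simp add: vshift_def col_def)
qed

text \<open>Both \<open>M\<close> and its inverse \<open>N\<close> fix the generators, so each is \<open>\<ge>\<close> the identity on
  the column space; as \<open>N \<otimes> M = E\<close>, \<open>M\<close> acts trivially on it and hence equals \<open>E\<close>.\<close>
lemma trivial_if_fixes_generators:
  assumes M: "M \<in> H" and N: "N \<in> H" and NM: "tmult N M = E"
    and fixes_M: "\<And>j. j \<in> S \<Longrightarrow> tmv M (col E j) = col E j"
    and fixes_N: "\<And>j. j \<in> S \<Longrightarrow> tmv N (col E j) = col E j"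
  shows "M = E"
proof -
  have M_fix: "tmv M v = v" if v: "in_colspace E v" for v
  proof
    fix i
    have "tmv M v i \<le> tmv N (tmv M v) i"
      using le_tmv_if_fixes_generators[OF N fixes_N in_colspace_tmv[OF M]] .
    also have "\<dots> = v i" using v by (simp add: NM in_colspace_def flip: tmv_tmult)
    finally show "tmv M v i = v i"
      using le_tmv_if_fixes_generators[OF M fixes_M v, of i] by linarith
  qed
  show ?thesis
  proof (intro ext)
    fix i k
    have "M i k = tmv M (col E k) i" using right_unit[OF M] by (metis tmult_eq_tmv)
    also have "\<dots> = E i k" using M_fix[OF in_colspace_col[OF idem]] by (simp add: col_def)
    finally show "M i k = E i k" .
  qed
qed

lemma eq_if_perm_of_mean_scale_eq:
  assumes A: "A \<in> H" and A': "A' \<in> H"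
    and perm: "perm_of A = perm_of A'" and mean: "mean_scale A = mean_scale A'"
  shows "A = A'"
proof -
  obtain B where B: "B \<in> H" "tmult A B = E" "tmult B A = E" using inverse A by blast
  obtain B' where B': "B' \<in> H" "tmult A' B' = E" "tmult B' A' = E" using inverse A' by blast
  define M N where "M = tmult A' B" and "N = tmult A B'"
  have MN: "M \<in> H" "N \<in> H" using closed A A' B B' by (auto simp: M_def N_def)
  have "perm_of M = id" "perm_of N = id"
    using perm_of_tmult perm_of_E A A' B B' perm by (metis M_def N_def)+
  moreover have "mean_scale M = 0" "mean_scale N = 0"
    using mean_scale_tmult mean_scale_E A A' B B' mean by (metis M_def N_def add_diff_cancel_left' diff_self)+
  ultimately have "\<And>j. j \<in> S \<Longrightarrow> tmv M (col E j) = col E j" "\<And>j. j \<in> S \<Longrightarrow> tmv N (col E j) = col E j"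
    using fixes_generators[OF MN(1)] fixes_generators[OF MN(2)] by auto
  moreover have "tmult N M = E"
  proof -
    have "tmult N M = tmult A (tmult (tmult B' A') B)" by (simp add: M_def N_def tmult_assoc)
    then show ?thesis using B'(3) left_unit[OF B(1)] B(2) by simp
  qed
  ultimately have "M = E" using trivial_if_fixes_generators MN by blast
  have "A' = tmult A' (tmult B A)" using right_unit[OF A'] B(3) by simp
  also have "\<dots> = tmult M A" by (simp add: M_def tmult_assoc)
  also have "\<dots> = A" using \<open>M = E\<close> left_unit[OF A] by simp
  finally show ?thesis by simp
qed

end

lemma BijGroup_UNIV_mult:
  "f \<in> carrier (BijGroup UNIV) \<Longrightarrow> g \<in> carrier (BijGroup UNIV) \<Longrightarrow> f \<otimes>\<^bsub>BijGroup UNIV\<^esub> g = f \<circ> g"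
  by (simp add: BijGroup_def compose_def fun_eq_iff)

lemma BijGroup_UNIV_one: "\<one>\<^bsub>BijGroup UNIV\<^esub> = id"
  by (simp add: BijGroup_def fun_eq_iff)

context shift_closed_group
begin

lemma perm_of_BijGroup: "A \<in> H \<Longrightarrow> perm_of A \<in> carrier (BijGroup UNIV)"
  using bij_perm_of by (simp add: BijGroup_def Bij_def)

lemma subgroup_perm_of_image: "subgroup (perm_of ` H) (BijGroup UNIV)"
proof (rule subgroup.intro)
  show "perm_of ` H \<subseteq> carrier (BijGroup UNIV)" using perm_of_BijGroup by blast
  show "\<one>\<^bsub>BijGroup UNIV\<^esub> \<in> perm_of ` H" using BijGroup_UNIV_one perm_of_E E_in by (metis image_eqI)
next
  fix f g assume "f \<in> perm_of ` H" "g \<in> perm_of ` H"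
  then obtain A B where "A \<in> H" "B \<in> H" "f = perm_of A" "g = perm_of B" by blast
  then show "f \<otimes>\<^bsub>BijGroup UNIV\<^esub> g \<in> perm_of ` H"
    using closed by (simp add: BijGroup_UNIV_mult perm_of_BijGroup flip: perm_of_tmult)
next
  fix f assume "f \<in> perm_of ` H"
  then obtain A where A: "A \<in> H" "f = perm_of A" by blast
  obtain B where B: "B \<in> H" "tmult A B = E" "tmult B A = E" using inverse A(1) by blast
  have "inv\<^bsub>BijGroup UNIV\<^esub> (perm_of A) = perm_of B"
    using perm_of_inverse[OF A(1) B] A B
    by (intro group.inv_equality[OF group_BijGroup])
       (simp_all add: BijGroup_UNIV_mult BijGroup_UNIV_one perm_of_BijGroup)
  then show "inv\<^bsub>BijGroup UNIV\<^esub> f \<in> perm_of ` H" using A B by auto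
qed

abbreviation target_group :: "(real \<times> ('n \<Rightarrow> 'n)) monoid" where
  "target_group \<equiv> real_add_group \<times>\<times> (BijGroup UNIV)\<lparr>carrier := perm_of ` H\<rparr>"

lemma mean_scale_perm_of_hom: "(\<lambda>A. (mean_scale A, perm_of A)) \<in> hom (sg_group tmult H) target_group"
proof (rule homI)
  fix A assume "A \<in> carrier (sg_group tmult H)"
  then show "(mean_scale A, perm_of A) \<in> carrier target_group"
    by (simp add: sg_group_def real_add_group_def)
next
  fix A B assume "A \<in> carrier (sg_group tmult H)" "B \<in> carrier (sg_group tmult H)"
  then have "A \<in> H" "B \<in> H" by (simp_all add: sg_group_def)
  then show "(mean_scale (A \<otimes>\<^bsub>sg_group tmult H\<^esub> B), perm_of (A \<otimes>\<^bsub>sg_group tmult H\<^esub> B))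
      = (mean_scale A, perm_of A) \<otimes>\<^bsub>target_group\<^esub> (mean_scale B, perm_of B)"
    by (simp add: sg_group_def real_add_group_def mean_scale_tmult perm_of_tmult
        BijGroup_UNIV_mult perm_of_BijGroup)
qed

lemma mean_scale_perm_of_bij:
  "bij_betw (\<lambda>A. (mean_scale A, perm_of A)) (carrier (sg_group tmult H)) (carrier target_group)"
proof (rule bij_betw_imageI)
  show "inj_on (\<lambda>A. (mean_scale A, perm_of A)) (carrier (sg_group tmult H))"
    by (rule inj_onI) (auto simp: sg_group_def intro: eq_if_perm_of_mean_scale_eq)
  show "(\<lambda>A. (mean_scale A, perm_of A)) ` carrier (sg_group tmult H) = carrier target_group"
  proof (intro equalityI subsetI)
    fix p assume "p \<in> carrier target_group"
    then obtain c A where p: "p = (c, perm_of A)" "A \<in> H" by (auto simp: real_add_group_def)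
    then have "p = (mean_scale (mshift (c - mean_scale A) A), perm_of (mshift (c - mean_scale A) A))"
      by (simp add: mean_scale_mshift perm_of_mshift)
    with p(2) show "p \<in> (\<lambda>A. (mean_scale A, perm_of A)) ` carrier (sg_group tmult H)"
      by (auto simp: sg_group_def intro: shift_closed)
  qed (auto simp: sg_group_def real_add_group_def)
qed

lemma sg_group_iso: "sg_group tmult H \<cong> target_group"
  using mean_scale_perm_of_hom mean_scale_perm_of_bij by (auto simp: iso_def intro: is_isoI)

end

section \<open>Maximal subgroups\<close>

lemma subset_mshift_hull: "H \<subseteq> {mshift c A | c A. A \<in> H}"
  using mshift_0 by (metis (mono_tags, lifting) mem_Collect_eq subsetI)

lemma sg_subgroup_mshift_hull:
  assumes "sg_subgroup tmult H"
  shows "sg_subgroup tmult {mshift c A | c A. A \<in> H}" (is "sg_subgroup tmult ?K")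
proof -
  have closed: "\<forall>A\<in>H. \<forall>B\<in>H. tmult A B \<in> H" using assms unfolding sg_subgroup_def by blast
  from assms obtain E where "E \<in> H" and unit: "\<forall>A\<in>H. tmult E A = A \<and> tmult A E = A"
    and inverse: "\<forall>A\<in>H. \<exists>B\<in>H. tmult A B = E \<and> tmult B A = E"
    unfolding sg_subgroup_def by blast
  have "E \<in> ?K" using \<open>E \<in> H\<close> subset_mshift_hull by blast
  moreover have "tmult X Y \<in> ?K" if XY: "X \<in> ?K" "Y \<in> ?K" for X Y
  proof -
    obtain c d A B where "X = mshift c A" "Y = mshift d B" "A \<in> H" "B \<in> H" using XY by blast
    then show ?thesis using closed by (auto simp: tmult_mshift_left tmult_mshift_right mshift_mshift)
  qed
  moreover have "tmult E X = X \<and> tmult X E = X" if "X \<in> ?K" for X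
    using that unit by (auto simp: tmult_mshift_left tmult_mshift_right)
  moreover have "\<exists>Y\<in>?K. tmult X Y = E \<and> tmult Y X = E" if X_in: "X \<in> ?K" for X
  proof -
    obtain c A where X: "X = mshift c A" "A \<in> H" using X_in by blast
    obtain B where B: "B \<in> H" "tmult A B = E" "tmult B A = E" using inverse X(2) by blast
    have "mshift (- c) B \<in> ?K" using B(1) by blast
    moreover have "tmult X (mshift (- c) B) = E \<and> tmult (mshift (- c) B) X = E"
      using X B by (simp add: tmult_mshift_left tmult_mshift_right mshift_mshift mshift_0)
    ultimately show ?thesis by blast
  qed
  ultimately show ?thesis unfolding sg_subgroup_def by (intro conjI bexI[of _ E]) blast+
qed

lemma maximal_subgroup_mshift_closed:
  assumes "sg_maximal_subgroup tmult H" "A \<in> H"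
  shows "mshift c A \<in> H"
proof -
  have "{mshift c A | c A. A \<in> H} = H"
    using assms(1) subset_mshift_hull sg_subgroup_mshift_hull unfolding sg_maximal_subgroup_def by blast
  then show ?thesis using assms(2) by blast
qed

lemma ex_min_generating_set:
  assumes "tmult E E = E" shows "\<exists>S. min_generating_set E S"
proof -
  obtain S where "generating_set E S" "\<And>S'. generating_set E S' \<Longrightarrow> card S \<le> card S'"
    using ex_has_least_nat[of "generating_set E" UNIV card] generating_set_UNIV[OF assms] by blast
  then have "min_generating_set E S" using assms by (simp add: min_generating_set_def)
  then show ?thesis by blast
qed

theorem corollary7p10:
  fixes H :: "('n::finite) tmat set"
  assumes "sg_maximal_subgroup tmult H"
  shows "\<exists>\<Sigma>. subgroup \<Sigma> (BijGroup (UNIV :: 'n set)) \<and>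
           sg_group tmult H \<cong> real_add_group \<times>\<times> ((BijGroup (UNIV :: 'n set))\<lparr>carrier := \<Sigma>\<rparr>)"
proof -
  have sub: "sg_subgroup tmult H" using assms unfolding sg_maximal_subgroup_def by blast
  then obtain E where "E \<in> H" and unit: "\<forall>A\<in>H. tmult E A = A \<and> tmult A E = A"
    and inverse: "\<forall>A\<in>H. \<exists>B\<in>H. tmult A B = E \<and> tmult B A = E"
    unfolding sg_subgroup_def by blast
  obtain S where "min_generating_set E S"
    using ex_min_generating_set unit \<open>E \<in> H\<close> by blast
  then interpret shift_closed_group E S H
    using sub \<open>E \<in> H\<close> unit inverse maximal_subgroup_mshift_closed[OF assms]
    by (intro shift_closed_group.intro shift_closed_group_axioms.intro) (auto simp: sg_subgroup_def)
  show ?thesis using subgroup_perm_of_image sg_group_iso by blast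
qed

end
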